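(* Let $L>0$, $\tau>0$ and let $Z_1,\dots,Z_m$ be random variables with $\max_{1\le j\le m}\|Z_j\|_{\Psi_2(\cdot;L)}\le\tau$. Then for all $t>0$, $$P\Big(\max_{1\le j\le m}|Z_j|\ge \frac{\tau}{L}\Big(h_2^{-1}(L^2t/2)+h_2^{-1}\big(L^2\log(1+m)/2\big)\Big)\Big)\le 2e^{-t}.$$
   Context: For $x\ge 0$ let $h_2(x)=(1+x)\log(1+x)-x$, an increasing bijection of $[0,\infty)$ onto itself, with inverse $h_2^{-1}$. For $L>0$ let $\Psi_2(x;L)=\exp\big(\frac{2}{L^2}h_2(Lx)\big)-1$. The Orlicz norm is $\|X\|_{\Psi}=\inf\{c>0: E\Psi(|X|/c)\le 1\}$. *)

theory Defs
  imports "HOL-Probability.Probability"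
begin

definition h2 :: "real \<Rightarrow> real" where
  "h2 x = (1 + x) * ln (1 + x) - x"

definition h2_inv :: "real \<Rightarrow> real" where
  "h2_inv y = (THE x. 0 \<le> x \<and> h2 x = y)"

definition Psi2 :: "real \<Rightarrow> real \<Rightarrow> real" where
  "Psi2 L x = exp (2 / L^2 * h2 (L * x)) - 1"

text \<open>Orlicz norm, valued in the extended reals (infimum of the empty set is +infinity);
  the expectation of the nonnegative quantity is the nonnegative Lebesgue integral.\<close>
definition orlicz_norm :: "'a measure \<Rightarrow> (real \<Rightarrow> real) \<Rightarrow> ('a \<Rightarrow> real) \<Rightarrow> ereal" where
  "orlicz_norm M Psi X =
     Inf {ereal c | c. c > 0 \<and> (\<integral>\<^sup>+ x. ennreal (Psi (\<bar>X x\<bar> / c)) \<partial>M) \<le> 1}"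

end

theory Submission
  imports Defs
begin

text \<open>Markov's inequality applied to \<open>\<Psi>(|Z|/c)\<close> for every \<open>c\<close> above the Orlicz norm, followed
  by the limit \<open>c \<rightarrow> \<tau>\<close>, gives \<open>P(|Z| \<ge> \<tau> u) \<le> 1 / \<Psi>\<^sub>2(u)\<close>. With
  \<open>u = (h\<^sub>2\<inverse>(L\<^sup>2t/2) + h\<^sub>2\<inverse>(L\<^sup>2 log(1+m)/2)) / L\<close>, superadditivity of the convex function
  \<open>h\<^sub>2\<close> (which vanishes at 0) yields \<open>\<Psi>\<^sub>2(u) \<ge> e\<^sup>t(1+m) - 1 \<ge> m e\<^sup>t\<close>, and a union bound
  over the \<open>m\<close> variables finishes the proof.\<close>

lemma h2_0 [simp]: "h2 0 = 0"
  by (simp add: h2_def)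

lemma h2_has_real_derivative: "x > -1 \<Longrightarrow> (h2 has_real_derivative ln (1 + x)) (at x)"
  unfolding h2_def[abs_def] by (auto intro!: derivative_eq_intros simp: field_simps)

lemma continuous_on_h2: "continuous_on {0..} h2"
  by (intro continuous_at_imp_continuous_on ballI DERIV_isCont[OF h2_has_real_derivative]) auto

lemma strict_mono_on_h2: "strict_mono_on {0..} h2"
proof (rule strict_mono_onI)
  fix x y :: real assume x: "x \<in> {0..}" and "x < y"
  show "h2 x < h2 y"
  proof (rule DERIV_pos_imp_increasing_open[OF \<open>x < y\<close>])
    fix z assume "x < z" "z < y"
    with x show "\<exists>d. (h2 has_real_derivative d) (at z) \<and> 0 < d"
      by (intro exI[of _ "ln (1 + z)"] conjI h2_has_real_derivative) auto
  qed (use x in \<open>auto intro: continuous_on_subset[OF continuous_on_h2]\<close>)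
qed

lemma h2_ge_self:
  assumes "exp 2 - 1 \<le> x"
  shows "x \<le> h2 x"
proof -
  have x: "exp 2 \<le> 1 + x" "0 \<le> 1 + x"
    using assms one_le_exp_iff[of "2::real"] by linarith+
  moreover have "2 \<le> ln (1 + x)"
    using ln_mono[OF x(1) exp_gt_zero] by simp
  ultimately have "(1 + x) * 2 \<le> (1 + x) * ln (1 + x)"
    by (intro mult_left_mono)
  then show ?thesis
    unfolding h2_def by (simp add: algebra_simps)
qed

lemma h2_superadditive:
  assumes "0 \<le> a" "0 \<le> b"
  shows "h2 a + h2 b \<le> h2 (a + b)"
proof -
  have "h2 (0 + b) - h2 0 \<le> h2 (a + b) - h2 a"
  proof (rule DERIV_nonneg_imp_increasing_open[OF assms(1)])
    fix z assume z: "0 < z" "z < a"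
    with assms have "((\<lambda>s. h2 (s + b) - h2 s) has_real_derivative ln (1 + (z + b)) - ln (1 + z)) (at z)"
      by (auto intro!: derivative_eq_intros DERIV_chain2[OF h2_has_real_derivative] h2_has_real_derivative)
    moreover have "ln (1 + z) \<le> ln (1 + (z + b))"
      using z assms by simp
    ultimately show "\<exists>d. ((\<lambda>s. h2 (s + b) - h2 s) has_real_derivative d) (at z) \<and> 0 \<le> d"
      by auto
  next
    show "continuous_on {0..a} (\<lambda>s. h2 (s + b) - h2 s)"
      using assms
      by (intro continuous_intros continuous_on_subset[OF continuous_on_h2]
          continuous_on_compose2[OF continuous_on_h2]) auto
  qed
  then show ?thesis by simp
qed

lemma
  assumes "0 \<le> y"
  shows h2_inv_nonneg: "0 \<le> h2_inv y" and h2_h2_inv: "h2 (h2_inv y) = y"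
proof -
  define r where "r = max y (exp 2 - 1)"
  have "\<exists>x. 0 \<le> x \<and> x \<le> r \<and> h2 x = y"
  proof (rule IVT')
    show "y \<le> h2 r"
      using h2_ge_self[of r] by (simp add: r_def)
  qed (use assms continuous_on_subset[OF continuous_on_h2] in \<open>auto simp: r_def\<close>)
  then obtain x where x: "0 \<le> x" "h2 x = y" by blast
  have "h2_inv y = x"
    unfolding h2_inv_def
  proof (rule the_equality)
    fix z assume "0 \<le> z \<and> h2 z = y"
    with x show "z = x"
      using strict_mono_on_imp_inj_on[OF strict_mono_on_h2] by (auto dest: inj_onD)
  qed (use x in simp)
  with x show "0 \<le> h2_inv y" "h2 (h2_inv y) = y" by simp_all
qed

lemma mono_on_Psi2:
  assumes "L > 0"
  shows "mono_on {0..} (Psi2 L)"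
proof (rule mono_onI)
  fix r s :: real assume "r \<in> {0..}" "s \<in> {0..}" "r \<le> s"
  with assms have "h2 (L * r) \<le> h2 (L * s)"
    by (intro strict_mono_on_leD[OF strict_mono_on_h2]) auto
  with assms show "Psi2 L r \<le> Psi2 L s"
    unfolding Psi2_def by (simp add: divide_right_mono)
qed

lemma continuous_on_Psi2: "L > 0 \<Longrightarrow> continuous_on {0..} (Psi2 L)"
  unfolding Psi2_def
  by (intro continuous_intros continuous_on_compose2[OF continuous_on_h2]) auto

lemma Psi2_h2_inv_sum_ge:
  assumes "L > 0" "0 \<le> A" "0 \<le> B"
  shows "exp (A + B) - 1 \<le> Psi2 L ((h2_inv (L^2 * A / 2) + h2_inv (L^2 * B / 2)) / L)"
proof -
  let ?a = "h2_inv (L^2 * A / 2)" and ?b = "h2_inv (L^2 * B / 2)"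
  have "L^2 * A / 2 + L^2 * B / 2 \<le> h2 (?a + ?b)"
    using h2_superadditive[of ?a ?b] assms by (simp add: h2_inv_nonneg h2_h2_inv)
  then have "A + B \<le> 2 / L^2 * h2 (?a + ?b)"
    using assms by (simp add: field_simps)
  then show ?thesis
    using assms by (simp add: Psi2_def)
qed

lemma Psi2_union_bound_threshold_ge:
  assumes "L > 0" "0 \<le> t"
  shows "real m * exp t \<le> Psi2 L ((h2_inv (L^2 * t / 2) + h2_inv (L^2 * ln (1 + real m) / 2)) / L)"
proof -
  have "real m * exp t \<le> exp t * (1 + real m) - 1"
    using assms(2) by (simp add: algebra_simps)
  also have "\<dots> = exp (t + ln (1 + real m)) - 1"
    by (simp add: exp_add)
  also have "\<dots> \<le> Psi2 L ((h2_inv (L^2 * t / 2) + h2_inv (L^2 * ln (1 + real m) / 2)) / L)"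
    using assms by (intro Psi2_h2_inv_sum_ge) auto
  finally show ?thesis .
qed

lemma orlicz_norm_less_imp_nn_integral_le:
  fixes X :: "'a \<Rightarrow> real" and Psi :: "real \<Rightarrow> real"
  assumes "mono_on {0..} Psi" "c > 0" "orlicz_norm M Psi X < ereal c"
  shows "(\<integral>\<^sup>+ x. ennreal (Psi (\<bar>X x\<bar> / c)) \<partial>M) \<le> 1"
proof -
  obtain c' where c': "c' > 0" "c' < c" "(\<integral>\<^sup>+ x. ennreal (Psi (\<bar>X x\<bar> / c')) \<partial>M) \<le> 1"
    using assms(3) unfolding orlicz_norm_def by (auto simp: Inf_less_iff)
  have "(\<integral>\<^sup>+ x. ennreal (Psi (\<bar>X x\<bar> / c)) \<partial>M) \<le> (\<integral>\<^sup>+ x. ennreal (Psi (\<bar>X x\<bar> / c')) \<partial>M)"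
    using assms(1,2) c'
    by (intro nn_integral_mono ennreal_leI mono_onD[OF assms(1)]) (auto intro: divide_left_mono)
  with c' show ?thesis by order
qed

lemma orlicz_Markov_inequality:
  fixes X :: "'a \<Rightarrow> real" and Psi :: "real \<Rightarrow> real"
  assumes "finite_measure M" and [measurable]: "X \<in> borel_measurable M"
    and "mono_on {0..} Psi" "c > 0" "s \<ge> 0"
    and "(\<integral>\<^sup>+ x. ennreal (Psi (\<bar>X x\<bar> / c)) \<partial>M) \<le> 1"
  shows "measure M {x \<in> space M. s \<le> \<bar>X x\<bar>} * Psi (s / c) \<le> 1"
proof -
  interpret finite_measure M by fact
  define S where "S = {x \<in> space M. s \<le> \<bar>X x\<bar>}"
  have S: "S \<in> sets M" unfolding S_def by measurable
  have "ennreal (Psi (s / c)) * emeasure M S = (\<integral>\<^sup>+ x. ennreal (Psi (s / c)) * indicator S x \<partial>M)"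
    using S by (simp add: nn_integral_cmult_indicator)
  also have "\<dots> \<le> (\<integral>\<^sup>+ x. ennreal (Psi (\<bar>X x\<bar> / c)) \<partial>M)"
    using assms(4,5)
    by (intro nn_integral_mono)
       (auto simp: S_def indicator_def intro!: ennreal_leI mono_onD[OF assms(3)] divide_right_mono)
  finally have "ennreal (Psi (s / c)) * ennreal (measure M S) \<le> 1"
    using assms(6) by (simp add: emeasure_eq_measure)
  then show ?thesis
    unfolding S_def[symmetric]
    by (cases "Psi (s / c) \<ge> 0") (auto simp: ennreal_mult'[symmetric] mult.commute
        intro: order.trans[OF mult_nonpos_nonneg])
qed

lemma orlicz_norm_tail_bound:
  fixes X :: "'a \<Rightarrow> real" and Psi :: "real \<Rightarrow> real"
  assumes "finite_measure M" "X \<in> borel_measurable M"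
    and "mono_on {0..} Psi" "continuous_on {0..} Psi"
    and "orlicz_norm M Psi X \<le> ereal \<tau>" "\<tau> > 0" "s \<ge> 0" "Psi (s / \<tau>) > 0"
  shows "measure M {x \<in> space M. s \<le> \<bar>X x\<bar>} \<le> 1 / Psi (s / \<tau>)"
proof -
  let ?P = "measure M {x \<in> space M. s \<le> \<bar>X x\<bar>}"
  have "eventually (\<lambda>c. s / c \<in> {0..}) (at_right \<tau>)"
    using eventually_at_right_less[of \<tau>] assms(6,7) by (auto elim!: eventually_mono)
  then have "((\<lambda>c. ?P * Psi (s / c)) \<longlongrightarrow> ?P * Psi (s / \<tau>)) (at_right \<tau>)"
    using assms(6,7)
    by (intro tendsto_mult_left continuous_on_tendsto_compose[OF assms(4)] tendsto_intros) auto
  moreover have "eventually (\<lambda>c. ?P * Psi (s / c) \<le> 1) (at_right \<tau>)"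
  proof (rule eventually_at_rightI)
    fix c assume c: "c \<in> {\<tau><..<\<tau> + 1}"
    with assms(5) have "orlicz_norm M Psi X < ereal c"
      by (auto intro: le_less_trans)
    with assms c show "?P * Psi (s / c) \<le> 1"
      by (intro orlicz_Markov_inequality orlicz_norm_less_imp_nn_integral_le) auto
  qed simp
  ultimately have "?P * Psi (s / \<tau>) \<le> 1"
    by (rule tendsto_upperbound) simp
  with assms(8) show ?thesis
    by (simp add: field_simps)
qed

lemma measure_Max_ge_le_sum:
  fixes f :: "'i \<Rightarrow> 'a \<Rightarrow> real"
  assumes "finite_measure M" "finite I" "I \<noteq> {}" "\<And>j. j \<in> I \<Longrightarrow> f j \<in> borel_measurable M"
  shows "measure M {x \<in> space M. s \<le> (MAX j\<in>I. f j x)}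
         \<le> (\<Sum>j\<in>I. measure M {x \<in> space M. s \<le> f j x})"
proof -
  interpret finite_measure M by fact
  have "{x \<in> space M. s \<le> (MAX j\<in>I. f j x)} = (\<Union>j\<in>I. {x \<in> space M. s \<le> f j x})"
    using assms(2,3) by (auto simp: Max_ge_iff)
  also have "measure M \<dots> \<le> (\<Sum>j\<in>I. measure M {x \<in> space M. s \<le> f j x})"
    using assms(2,4) by (intro finite_measure_subadditive_finite) auto
  finally show ?thesis .
qed

theorem lemma9:
  fixes M :: "'a measure" and Z :: "nat \<Rightarrow> 'a \<Rightarrow> real"
    and L \<tau> t :: real and m :: nat
  assumes "prob_space M"
    and "m \<ge> 1"
    and "L > 0" and "\<tau> > 0"
    and "\<And>j. j \<in> {1..m} \<Longrightarrow> Z j \<in> borel_measurable M"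
    and "\<And>j. j \<in> {1..m} \<Longrightarrow> orlicz_norm M (Psi2 L) (Z j) \<le> ereal \<tau>"
    and "t > 0"
  shows "measure M {x \<in> space M. (MAX j\<in>{1..m}. \<bar>Z j x\<bar>) \<ge>
            \<tau> / L * (h2_inv (L^2 * t / 2) + h2_inv (L^2 * ln (1 + real m) / 2))}
         \<le> 2 * exp (- t)"
proof -
  interpret prob_space M by fact
  define u where "u = (h2_inv (L^2 * t / 2) + h2_inv (L^2 * ln (1 + real m) / 2)) / L"
  have u: "0 \<le> u"
    using assms(3,7) by (simp add: u_def h2_inv_nonneg)
  have Psi_u: "real m * exp t \<le> Psi2 L u"
    using Psi2_union_bound_threshold_ge[of L t m] assms(3,7) by (simp add: u_def)
  have m_exp_t: "0 < real m * exp t"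
    using assms(2) by simp
  with Psi_u have Psi_pos: "0 < Psi2 L u"
    by linarith
  have tail: "measure M {x \<in> space M. \<tau> * u \<le> \<bar>Z j x\<bar>} \<le> 1 / Psi2 L u"
    if j: "j \<in> {1..m}" for j
    using orlicz_norm_tail_bound[OF finite_measure_axioms assms(5)[OF j] mono_on_Psi2[OF assms(3)]
        continuous_on_Psi2[OF assms(3)] assms(6)[OF j] assms(4), of "\<tau> * u"] assms(4) u Psi_pos
    by simp
  have "measure M {x \<in> space M. \<tau> * u \<le> (MAX j\<in>{1..m}. \<bar>Z j x\<bar>)}
        \<le> (\<Sum>j\<in>{1..m}. measure M {x \<in> space M. \<tau> * u \<le> \<bar>Z j x\<bar>})"
    using assms(2,5) by (intro measure_Max_ge_le_sum finite_measure_axioms) auto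
  also have "\<dots> \<le> (\<Sum>j\<in>{1..m}. 1 / Psi2 L u)"
    by (rule sum_mono) (rule tail)
  also have "\<dots> = real m / Psi2 L u"
    by simp
  also have "\<dots> \<le> real m / (real m * exp t)"
    using Psi_u Psi_pos m_exp_t by (intro divide_left_mono) simp_all
  also have "\<dots> = exp (- t)"
    using assms(2) by (simp add: exp_minus divide_inverse)
  also have "\<dots> \<le> 2 * exp (- t)"
    by simp
  finally show ?thesis
    by (simp add: u_def)
qed

end
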